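(* If $L$ is a finite dimensional representation of $Y^{[p]}$, then the subspace $L^0=\{v\in L : e^{(r)}.v=0 \text{ for all } r>0\}$ is non-zero.
   Context: Let $k$ be an algebraically closed field of characteristic $p>2$, parities $|1|=0$, $|2|=1$. $Y=Y_{1|1}$ is the superalgebra over $k$ with generators $t_{i,j}^{(r)}$ ($1\le i,j\le2$, $r>0$, parity $|i|+|j|$) and relations $[t_{i,j}^{(r)},t_{k,l}^{(s)}]=(-1)^{|i||j|+|i||k|+|j||k|}\sum_{t=0}^{\min(r,s)-1}(t_{k,j}^{(t)}t_{i,l}^{(r+s-1-t)}-t_{k,j}^{(r+s-1-t)}t_{i,l}^{(t)})$, $t_{i,j}^{(0)}=\delta_{ij}$; $t_{i,j}(u)=\sum_{r\ge0}t_{i,j}^{(r)}u^{-r}$. The elements $d_i^{(r)},e^{(r)},f^{(r)}$ are the coefficients of $d_i(u)$, $e(u)=\sum_{r>0}e^{(r)}u^{-r}$, $f(u)$ defined by $t_{1,1}=d_1$, $t_{1,2}=d_1e$, $t_{2,1}=fd_1$, $t_{2,2}=fd_1e+d_2$. Let $b_1(u)=d_1(u)d_1(u-1)\cdots d_1(u-p+1)$, $b_2(u)=d_2(u)^{-1}\cdots d_2(u-p+1)^{-1}$ with coefficients $b_i^{(r)}$; the $b_i^{(rp)}$ are central and $Y^{[p]}=Y/YZ_p(Y)_+$, where $Z_p(Y)_+$ is the ideal generated by the $b_i^{(rp)}$ ($i=1,2,r>0$) in the subalgebra they generate. Images in $Y^{[p]}$ keep the same names. *)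

theory Defs
  imports "HOL-Analysis.Analysis" "HOL-Computational_Algebra.Polynomial"
begin

definition alg_closed :: "'k::field itself \<Rightarrow> bool" where
  "alg_closed _ \<longleftrightarrow> (\<forall>q :: 'k poly. degree q > 0 \<longrightarrow> (\<exists>x. poly q x = 0))"

text \<open>Formal series in u^{-1} with (square) matrix coefficients over k,
  represented by their coefficient sequence: A r is the coefficient of u^{-r}.\<close>
type_synonym ('k,'n) mser = "nat \<Rightarrow> 'k^'n^'n"

definition sone :: "('k::field,'n::finite) mser" where
  "sone r = (if r = 0 then mat 1 else 0)"

definition smul :: "('k::field,'n::finite) mser \<Rightarrow> ('k,'n) mser \<Rightarrow> ('k,'n) mser" where
  "smul A B r = (\<Sum>s\<le>r. A s ** B (r - s))"

primrec spow :: "('k::field,'n::finite) mser \<Rightarrow> nat \<Rightarrow> ('k,'n) mser" where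
  "spow A 0 = sone"
| "spow A (Suc m) = smul A (spow A m)"

text \<open>Inverse of a series with constant term 1: (1 - N)^{-1} = sum of N^m, N = 1 - A.\<close>
definition sinv :: "('k::field,'n::finite) mser \<Rightarrow> ('k,'n) mser" where
  "sinv A r = (\<Sum>m\<le>r. spow (\<lambda>s. sone s - A s) m r)"

text \<open>Shift: given A(u) = sum_r A r u^{-r}, the coefficients of A(u - a), using
  (u-a)^{-r} = sum_m (r+m-1 choose m) a^m u^{-r-m}.\<close>
definition sshift :: "'k::field \<Rightarrow> ('k,'n::finite) mser \<Rightarrow> ('k,'n) mser" where
  "sshift a A q = (if q = 0 then A 0
     else (\<Sum>r\<in>{1..q}. mat (of_nat ((q - 1) choose (q - r)) * a ^ (q - r)) ** A r))"

definition ipar :: "nat \<Rightarrow> nat" where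
  "ipar i = (if i = 2 then 1 else 0)"

text \<open>t_{ij}^{(r)} including t_{ij}^{(0)} = delta_{ij}; T gives the action of the
  generators t_{ij}^{(r)}, r > 0, as matrices.\<close>
definition tser :: "(nat \<Rightarrow> nat \<Rightarrow> nat \<Rightarrow> 'k^'n^'n) \<Rightarrow> nat \<Rightarrow> nat \<Rightarrow> ('k::field,'n::finite) mser" where
  "tser T i j r = (if r = 0 then (if i = j then mat 1 else 0) else T i j r)"

text \<open>The RTT (super)commutator relations of Y_{1|1}, r, s > 0.\<close>
definition yangian_rels :: "(nat \<Rightarrow> nat \<Rightarrow> nat \<Rightarrow> 'k::field^'n::finite^'n) \<Rightarrow> bool" where
  "yangian_rels T \<longleftrightarrow>
    (\<forall>i\<in>{1,2}. \<forall>j\<in>{1,2}. \<forall>k\<in>{1,2}. \<forall>l\<in>{1,2}. \<forall>r>0. \<forall>s>0.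
       T i j r ** T k l s
         - mat ((-1) ^ ((ipar i + ipar j) * (ipar k + ipar l))) ** (T k l s ** T i j r)
       = mat ((-1) ^ (ipar i * ipar j + ipar i * ipar k + ipar j * ipar k)) **
         (\<Sum>t<min r s. tser T k j t ** tser T i l (r + s - 1 - t)
                      - tser T k j (r + s - 1 - t) ** tser T i l t))"

text \<open>Super structure: the module k^n is graded by a parity of the basis vectors,
  and t_{ij}^{(r)} acts by an operator of parity |i|+|j|.\<close>
definition graded_action :: "('n::finite \<Rightarrow> nat) \<Rightarrow> (nat \<Rightarrow> nat \<Rightarrow> nat \<Rightarrow> 'k::field^'n^'n) \<Rightarrow> bool" where
  "graded_action par T \<longleftrightarrow>
    (\<forall>i\<in>{1,2}. \<forall>j\<in>{1,2}. \<forall>r>0. \<forall>a b. T i j r $ a $ b \<noteq> 0 \<longrightarrow>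
        (par a + par b) mod 2 = (ipar i + ipar j) mod 2)"

definition d1ser where "d1ser T = tser T 1 1"
definition eser where "eser T = smul (sinv (d1ser T)) (tser T 1 2)"
definition fser where "fser T = smul (tser T 2 1) (sinv (d1ser T))"
definition d2ser where
  "d2ser T = (\<lambda>r. tser T 2 2 r - smul (smul (fser T) (d1ser T)) (eser T) r)"

text \<open>b_1(u) = d_1(u) d_1(u-1) ... d_1(u-p+1), b_2(u) = d_2(u)^{-1} ... d_2(u-p+1)^{-1}.\<close>
definition b1ser :: "nat \<Rightarrow> (nat \<Rightarrow> nat \<Rightarrow> nat \<Rightarrow> 'k::field^'n::finite^'n) \<Rightarrow> ('k,'n) mser" where
  "b1ser p T = foldr (\<lambda>j acc. smul (sshift (of_nat j) (d1ser T)) acc) [0..<p] sone"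
definition b2ser :: "nat \<Rightarrow> (nat \<Rightarrow> nat \<Rightarrow> nat \<Rightarrow> 'k::field^'n::finite^'n) \<Rightarrow> ('k,'n) mser" where
  "b2ser p T = foldr (\<lambda>j acc. smul (sinv (sshift (of_nat j) (d2ser T))) acc) [0..<p] sone"

text \<open>A finite-dimensional representation of Y^{[p]} on k^n (n = CARD('n)): a graded
  representation of Y_{1|1} on which all b_i^{(rp)}, r > 0, act by zero.\<close>
definition Yp_rep :: "nat \<Rightarrow> ('n::finite \<Rightarrow> nat) \<Rightarrow> (nat \<Rightarrow> nat \<Rightarrow> nat \<Rightarrow> 'k::field^'n^'n) \<Rightarrow> bool" where
  "Yp_rep p par T \<longleftrightarrow> yangian_rels T \<and> graded_action par T \<and>
     (\<forall>r>0. b1ser p T (r * p) = 0 \<and> b2ser p T (r * p) = 0)"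

end

theory Submission
  imports Defs
begin

text \<open>Only the relations of the odd generators t_{12}^{(r)} among themselves and
  char k \<noteq> 2 are used. These relations
  say that the anticommutator of t^{(r)} and t^{(s)} is a combination of products
  t^{(a)} t^{(b)} with a < min r s. Hence the joint kernel K_m of t^{(1)}, ..., t^{(m)} is
  stable under every t^{(r)}, and t^{(m+1)} squares to zero on it. So t^{(m+1)} either
  kills a nonzero vector of K_m or maps one to a nonzero vector of K_{m+1}: all K_m are
  nonzero, and the decreasing chain of subspaces stabilises by finite dimensionality.
  A nonzero vector killed by every t_{12}^{(r)} is killed by every coefficient of
  e(u) = d_1(u)^{-1} t_{12}(u).\<close>

lemma matrix_vector_mult_sum_rdistrib:
  "finite S \<Longrightarrow> sum f S *v (x :: 'a::ring_1^'n) = (\<Sum>t\<in>S. f t *v x)"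
  by (induction S rule: finite_induct) (auto simp: matrix_vector_mult_add_rdistrib)

lemma matrix_mul_mat_minus_one: "mat (-1) ** (A :: 'a::ring_1^'n^'m) = - A"
  by (simp add: vec_eq_iff matrix_matrix_mult_def mat_def if_distrib if_distribR
      sum.delta cong: if_cong)

lemma smul_mult_vector_eq_0:
  assumes "\<And>k. B k *v v = 0"
  shows "smul A B r *v v = 0"
  by (simp add: smul_def matrix_vector_mult_sum_rdistrib matrix_vector_mul_assoc[symmetric] assms)

lemma decreasing_subspaces_stabilise:
  fixes K :: "nat \<Rightarrow> ('k::field^'n) set"
  assumes subspace: "\<And>m. vec.subspace (K m)"
    and decreasing: "\<And>m m'. m \<le> m' \<Longrightarrow> K m' \<subseteq> K m"
  shows "\<exists>m. \<forall>j. K m \<subseteq> K j"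
proof -
  obtain m where least: "\<And>j. vec.dim (K m) \<le> vec.dim (K j)"
    using ex_has_least_nat[of "\<lambda>_. True" 0 "\<lambda>j. vec.dim (K j)"] by auto
  have "K (max m j) = K m" for j
    by (rule vec.subspace_dim_equal[OF subspace subspace decreasing]) (auto simp: least)
  then have "K m \<subseteq> K j" for j
    by (metis decreasing max.cobounded2)
  then show ?thesis by blast
qed

text \<open>X models t_{12}: its relation with itself in Y_{1|1}, where t_{12} is odd, so the
  supercommutator is an anticommutator.\<close>
locale odd_rtt_series =
  fixes X :: "nat \<Rightarrow> 'k::field^'n::finite^'n"
  assumes X_0: "X 0 = 0"
    and anticommutator: "\<And>r s. 0 < r \<Longrightarrow> 0 < s \<Longrightarrow> X r ** X s + X s ** X r =
       (\<Sum>t<min r s. X t ** X (r + s - 1 - t) - X (r + s - 1 - t) ** X t)"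
    and two_neq_zero: "(2::'k) \<noteq> 0"
begin

lemma anticommutator_apply:
  "X r *v (X s *v v) + X s *v (X r *v v) =
     (\<Sum>t<min r s. X t *v (X (r + s - 1 - t) *v v) - X (r + s - 1 - t) *v (X t *v v))"
proof (cases "r = 0 \<or> s = 0")
  case True
  then show ?thesis by (auto simp: X_0)
next
  case False
  then have "(X r ** X s + X s ** X r) *v v =
      (\<Sum>t<min r s. X t ** X (r + s - 1 - t) - X (r + s - 1 - t) ** X t) *v v"
    by (simp add: anticommutator)
  then show ?thesis
    by (simp add: matrix_vector_mult_add_rdistrib matrix_vector_mult_diff_rdistrib
        matrix_vector_mult_sum_rdistrib matrix_vector_mul_assoc)
qed

lemma anticommutator_eq_0:
  assumes "\<And>t. t < min r s \<Longrightarrow> X t *v v = 0 \<and> X t *v (X (r + s - 1 - t) *v v) = 0"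
  shows "X r *v (X s *v v) + X s *v (X r *v v) = 0"
  unfolding anticommutator_apply using assms by (intro sum.neutral) auto

definition joint_kernel :: "nat \<Rightarrow> ('k^'n) set" where
  "joint_kernel m = {v. \<forall>r\<le>m. X r *v v = 0}"

lemma joint_kernel_subspace: "vec.subspace (joint_kernel m)"
  by (auto simp: vec.subspace_def joint_kernel_def matrix_vector_right_distrib
      vector_scalar_commute)

lemma joint_kernel_antimono: "m \<le> m' \<Longrightarrow> joint_kernel m' \<subseteq> joint_kernel m"
  by (auto simp: joint_kernel_def)

lemma joint_kernel_invariant:
  assumes "v \<in> joint_kernel m"
  shows "X r *v v \<in> joint_kernel m"
proof -
  have "X s *v (X r *v v) = 0" if "s \<le> m" for s
    using that
  proof (induction s arbitrary: r rule: less_induct)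
    case (less s)
    have "X t *v v = 0 \<and> X t *v (X (s + r - 1 - t) *v v) = 0" if "t < min s r" for t
      using that less assms by (auto simp: joint_kernel_def)
    then have "X s *v (X r *v v) + X r *v (X s *v v) = 0"
      by (rule anticommutator_eq_0)
    moreover have "X s *v v = 0"
      using less.prems assms by (auto simp: joint_kernel_def)
    ultimately show ?case by simp
  qed
  then show ?thesis by (simp add: joint_kernel_def)
qed

lemma square_next_vanishes_on_joint_kernel:
  assumes "v \<in> joint_kernel m"
  shows "X (Suc m) *v (X (Suc m) *v v) = 0"
proof -
  let ?w = "X (Suc m) *v (X (Suc m) *v v)"
  have "X t *v v = 0 \<and> X t *v (X k *v v) = 0" if "t \<le> m" for t k
    using that assms joint_kernel_invariant[OF assms, of k] by (simp add: joint_kernel_def)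
  then have "?w + ?w = 0"
    by (intro anticommutator_eq_0) simp
  moreover have "(2::'k) *s w = w + w" for w :: "'k^'n"
    by (metis one_add_one vec.scale_left_distrib vec.scale_one)
  ultimately have "(2::'k) *s ?w = 0"
    by simp
  then show ?thesis
    using two_neq_zero by simp
qed

lemma joint_kernel_nonzero: "\<exists>v\<in>joint_kernel m. v \<noteq> 0"
proof (induction m)
  case 0
  have "(\<chi> i. 1) \<noteq> (0 :: 'k^'n)" by (simp add: vec_eq_iff)
  then show ?case by (auto simp: joint_kernel_def X_0)
next
  case (Suc m)
  then obtain v where v: "v \<in> joint_kernel m" "v \<noteq> 0" by auto
  show ?case
  proof (cases "X (Suc m) *v v = 0")
    case True
    then have "v \<in> joint_kernel (Suc m)"
      using v by (auto simp: joint_kernel_def le_Suc_eq)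
    with v show ?thesis by auto
  next
    case False
    have "X (Suc m) *v v \<in> joint_kernel (Suc m)"
      using joint_kernel_invariant[OF v(1)] square_next_vanishes_on_joint_kernel[OF v(1)]
      by (auto simp: joint_kernel_def le_Suc_eq)
    with False show ?thesis by auto
  qed
qed

lemma common_null_vector: "\<exists>v. v \<noteq> 0 \<and> (\<forall>r. X r *v v = 0)"
proof -
  obtain m where least: "\<forall>j. joint_kernel m \<subseteq> joint_kernel j"
    using decreasing_subspaces_stabilise[of joint_kernel,
        OF joint_kernel_subspace joint_kernel_antimono]
    by blast
  obtain v where v: "v \<in> joint_kernel m" "v \<noteq> 0"
    using joint_kernel_nonzero by blast
  have "X r *v v = 0" for r
    using least v(1) by (auto simp: joint_kernel_def)
  with v(2) show ?thesis by blast
qed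

end

lemma yangian_rels_odd_rtt_series:
  assumes "yangian_rels T" and "(2::'k::field) \<noteq> 0"
  shows "odd_rtt_series (tser (T :: nat \<Rightarrow> nat \<Rightarrow> nat \<Rightarrow> 'k^'n::finite^'n) 1 2)"
proof
  show "tser T 1 2 0 = 0" by (simp add: tser_def)
  show "(2::'k) \<noteq> 0" by fact
  fix r s :: nat
  assume "0 < r" "0 < s"
  then have "T 1 2 r ** T 1 2 s
        - mat ((-1) ^ ((ipar 1 + ipar 2) * (ipar 1 + ipar 2))) ** (T 1 2 s ** T 1 2 r) =
      mat ((-1) ^ (ipar 1 * ipar 2 + ipar 1 * ipar 1 + ipar 2 * ipar 1)) **
        (\<Sum>t<min r s. tser T 1 2 t ** tser T 1 2 (r + s - 1 - t)
                      - tser T 1 2 (r + s - 1 - t) ** tser T 1 2 t)"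
    using yangian_rels_def[THEN iffD1, rule_format, OF assms(1), of 1 2 1 2 r s] by simp
  moreover have "mat ((-1) ^ ((ipar 1 + ipar 2) * (ipar 1 + ipar 2))) = (mat (-1) :: 'k^'n^'n)"
    and "mat ((-1) ^ (ipar 1 * ipar 2 + ipar 1 * ipar 1 + ipar 2 * ipar 1)) = (mat 1 :: 'k^'n^'n)"
    by (simp_all add: ipar_def)
  moreover have "tser T 1 2 r = T 1 2 r" and "tser T 1 2 s = T 1 2 s"
    using \<open>0 < r\<close> \<open>0 < s\<close> by (simp_all add: tser_def)
  ultimately show "tser T 1 2 r ** tser T 1 2 s + tser T 1 2 s ** tser T 1 2 r =
      (\<Sum>t<min r s. tser T 1 2 t ** tser T 1 2 (r + s - 1 - t)
                    - tser T 1 2 (r + s - 1 - t) ** tser T 1 2 t)"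
    using matrix_mul_mat_minus_one[of "T 1 2 s ** T 1 2 r"] by simp
qed

lemma two_neq_zero_if_CHAR_gt_2:
  assumes "CHAR('k::field) > 2"
  shows "(2::'k) \<noteq> 0"
  using of_nat_eq_0_iff_char_dvd[of 2, where 'a='k] assms
  by (auto dest: nat_dvd_not_less)

theorem lemma3p4:
  fixes p :: nat
    and par :: "'n::finite \<Rightarrow> nat"
    and T :: "nat \<Rightarrow> nat \<Rightarrow> nat \<Rightarrow> 'k::field^'n^'n"
  assumes "alg_closed TYPE('k)"
    and "CHAR('k) = p" and "prime p" and "p > 2"
    and "Yp_rep p par T"
  shows "\<exists>v :: 'k^'n. v \<noteq> 0 \<and> (\<forall>r>0. eser T r *v v = 0)"
proof -
  have "odd_rtt_series (tser T 1 2)"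
  proof (rule yangian_rels_odd_rtt_series)
    show "yangian_rels T" using assms(5) by (simp add: Yp_rep_def)
    show "(2::'k) \<noteq> 0" using assms(2,4) by (simp add: two_neq_zero_if_CHAR_gt_2)
  qed
  then obtain v where "v \<noteq> 0" "\<And>r. tser T 1 2 r *v v = 0"
    using odd_rtt_series.common_null_vector by blast
  then show ?thesis
    by (auto simp: eser_def intro: smul_mult_vector_eq_0)
qed

end
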